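(* Let $\lambda>0$ and let $H_3=\mathbb{R}^3$ with coordinates $(x,y,z)$ carry the Lorentzian metric $g_2=\frac{1}{\lambda^2}dx^2+dy^2-(x\,dy+dz)^2$, with Levi-Civita connection $\nabla$. Let $e_1=\partial_y-x\partial_z$, $e_2=\lambda\partial_x$, $e_3=\partial_z$, and let $V_3=\lambda\partial_x-\lambda y\partial_z\,(=e_2-\lambda ye_3)$. Then every $V_3$-magnetic curve $\gamma(t)=(x(t),y(t),z(t))$, i.e. every smooth curve with $\nabla_{\gamma'}\gamma'=V_3\wedge\gamma'$, satisfies the system $y''-x'(z'+xy')=yx'+(z'+xy')$, $\frac{x''}{\lambda}+\lambda y'(z'+xy')=-\lambda yy'$, $(z'+xy')'=y'$.
   Context: $(e_1,e_2,e_3)$ is a $g_2$-orthonormal frame with $e_3$ timelike. For $X=\sum X^ie_i$, $Y=\sum Y^ie_i$ the vector product is defined in this frame by $X\wedge Y=(X^2Y^3-X^3Y^2)e_1+(X^3Y^1-X^1Y^3)e_2+(X^2Y^1-X^1Y^2)e_3$. Primes denote derivatives in $t$. *)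

theory Defs
  imports "HOL-Analysis.Analysis"
begin

text \<open>Points of H_3 = R^3 are vectors p :: real^3 with p$1 = x, p$2 = y, p$3 = z.\<close>

text \<open>Matrix of the Lorentzian metric g_2 = (1/lambda^2) dx^2 + dy^2 - (x dy + dz)^2
  in the coordinate basis (d_x, d_y, d_z).\<close>
definition g2 :: "real \<Rightarrow> real^3 \<Rightarrow> real^3^3" where
  "g2 lam p = (\<chi> i j.
      (if i = 1 \<and> j = 1 then 1 / lam^2 else 0)
    + (if i = 2 \<and> j = 2 then 1 else 0)
    - (if i = 1 then 0 else if i = 2 then p$1 else 1)
    * (if j = 1 then 0 else if j = 2 then p$1 else 1))"

definition pderiv3 :: "(real^3 \<Rightarrow> real) \<Rightarrow> 3 \<Rightarrow> real^3 \<Rightarrow> real" where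
  "pderiv3 f k p = deriv (\<lambda>s. f (p + s *\<^sub>R axis k 1)) 0"

definition christoffel :: "(real^3 \<Rightarrow> real^3^3) \<Rightarrow> real^3 \<Rightarrow> 3 \<Rightarrow> 3 \<Rightarrow> 3 \<Rightarrow> real" where
  "christoffel g p k i j = (1/2) * (\<Sum>l\<in>UNIV. matrix_inv (g p) $ k $ l *
      (pderiv3 (\<lambda>q. g q $ j $ l) i p + pderiv3 (\<lambda>q. g q $ i $ l) j p
       - pderiv3 (\<lambda>q. g q $ i $ j) l p))"

text \<open>Covariant acceleration nabla_{gamma'} gamma' at a point p with velocity v and
  coordinate second derivative a, in coordinate components.\<close>
definition cov_accel :: "(real^3 \<Rightarrow> real^3^3) \<Rightarrow> real^3 \<Rightarrow> real^3 \<Rightarrow> real^3 \<Rightarrow> real^3" where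
  "cov_accel g p v a = (\<chi> k. a $ k + (\<Sum>i\<in>UNIV. \<Sum>j\<in>UNIV. christoffel g p k i j * v $ i * v $ j))"

definition frame :: "real \<Rightarrow> real^3 \<Rightarrow> 3 \<Rightarrow> real^3" where
  "frame lam p i = (if i = 1 then vector [0, 1, - p$1]
                    else if i = 2 then vector [lam, 0, 0]
                    else vector [0, 0, 1])"

definition frame_coords :: "real \<Rightarrow> real^3 \<Rightarrow> real^3 \<Rightarrow> real^3" where
  "frame_coords lam p X = (THE c. X = (\<Sum>i\<in>UNIV. c $ i *\<^sub>R frame lam p i))"

definition wedge :: "real \<Rightarrow> real^3 \<Rightarrow> real^3 \<Rightarrow> real^3 \<Rightarrow> real^3" where
  "wedge lam p X Y = (let a = frame_coords lam p X; b = frame_coords lam p Y in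
      (a$2 * b$3 - a$3 * b$2) *\<^sub>R frame lam p 1
    + (a$3 * b$1 - a$1 * b$3) *\<^sub>R frame lam p 2
    + (a$2 * b$1 - a$1 * b$2) *\<^sub>R frame lam p 3)"

definition V3 :: "real \<Rightarrow> real^3 \<Rightarrow> real^3" where
  "V3 lam p = vector [lam, 0, - lam * p$2]"

definition smooth_curve_derivs :: "real set \<Rightarrow> (nat \<Rightarrow> real \<Rightarrow> real^3) \<Rightarrow> bool" where
  "smooth_curve_derivs I D \<longleftrightarrow>
     (\<forall>n. \<forall>t\<in>I. (D n has_vector_derivative D (Suc n) t) (at t))"

end

theory Submission
  imports Defs
begin

text \<open>The inverse of \<open>g\<^sub>2\<close> is explicit and the entries of \<open>g\<^sub>2\<close> are quadratic polynomials in
  \<open>x\<close> alone, so the Christoffel symbols, and with them the covariant acceleration of \<open>\<gamma>\<close>, can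
  be written down in coordinates. The frame coordinates of a vector are explicit as well, which
  makes the vector product of \<open>V\<^sub>3\<close> with \<open>\<gamma>'\<close> explicit. Comparing the \<open>x\<close>- and \<open>y\<close>-components
  of the magnetic equation gives the first two equations; the \<open>z\<close>-component, after eliminating
  \<open>y''\<close> with the \<open>y\<close>-component, is exactly \<open>(z' + x y')' = y'\<close>.\<close>

lemma matrix_inv_eqI:
  fixes A B :: "'a::semiring_1^'n^'n"
  assumes AB: "A ** B = mat 1" and BA: "B ** A = mat 1"
  shows "matrix_inv A = B"
proof -
  have inv: "A ** matrix_inv A = mat 1"
    unfolding matrix_inv_def
    using someI[of "\<lambda>A'. A ** A' = mat 1 \<and> A' ** A = mat 1" B] AB BA by blast
  have "matrix_inv A = (B ** A) ** matrix_inv A" by (simp add: BA)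
  also have "\<dots> = B" by (simp add: matrix_mul_assoc[symmetric] inv)
  finally show ?thesis .
qed

lemma pderiv3_quadratic:
  "pderiv3 (\<lambda>q. a + b * q$m + c * (q$m)^2) k p = (if k = m then b + 2 * c * p$m else 0)"
  unfolding pderiv3_def
  by (rule DERIV_imp_deriv) (auto simp: axis_def intro!: derivative_eq_intros)

lemma has_real_derivative_vec_nth:
  "(f has_vector_derivative f') (at t) \<Longrightarrow> ((\<lambda>s. f s $ i) has_real_derivative f' $ i) (at t)"
  unfolding has_real_derivative_iff_has_vector_derivative
  by (drule bounded_linear.has_vector_derivative[OF bounded_linear_vec_nth]) simp

definition g2_inv :: "real \<Rightarrow> real^3 \<Rightarrow> real^3^3" where
  "g2_inv lam p = (\<chi> i j.
      if i = 1 \<and> j = 1 then lam^2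
      else if i = 1 \<or> j = 1 then 0
      else if i = 2 \<and> j = 2 then 1
      else if i = 3 \<and> j = 3 then (p$1)^2 - 1
      else - p$1)"

lemma matrix_inv_g2:
  assumes "lam \<noteq> 0"
  shows "matrix_inv (g2 lam p) = g2_inv lam p"
  using assms
  by (intro matrix_inv_eqI)
     (simp_all add: g2_def g2_inv_def matrix_matrix_mult_def mat_def vec_eq_iff forall_3 sum_3
        power2_eq_square algebra_simps)

lemma g2_nth_quadratic:
  "g2 lam q $ i $ j =
     ((if i = 1 \<and> j = 1 then 1 / lam^2 else 0) + (if i = 2 \<and> j = 2 then 1 else 0)
       - (if i = 3 \<and> j = 3 then 1 else 0))
   + (if (i = 2 \<and> j = 3) \<or> (i = 3 \<and> j = 2) then -1 else 0) * q$1
   + (if i = 2 \<and> j = 2 then -1 else 0) * (q$1)^2"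
  using exhaust_3[of i] exhaust_3[of j] by (auto simp: g2_def power2_eq_square)

lemma pderiv3_g2:
  "pderiv3 (\<lambda>q. g2 lam q $ i $ j) k p =
     (if k = 1 then (if (i = 2 \<and> j = 3) \<or> (i = 3 \<and> j = 2) then -1 else 0)
                    + 2 * (if i = 2 \<and> j = 2 then -1 else 0) * p$1
      else 0)"
  unfolding g2_nth_quadratic by (rule pderiv3_quadratic)

lemma cov_accel_g2:
  assumes "lam \<noteq> 0"
  shows "cov_accel (g2 lam) p v a = vector [
     a$1 + lam^2 * v$2 * (v$3 + p$1 * v$2),
     a$2 - v$1 * (v$3 + p$1 * v$2),
     a$3 + ((p$1)^2 + 1) * v$1 * v$2 + p$1 * v$1 * v$3]"
  unfolding cov_accel_def christoffel_def matrix_inv_g2[OF assms] pderiv3_g2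
  by (simp add: vec_eq_iff forall_3 sum_3 g2_inv_def field_simps power2_eq_square)

lemma frame_coords_eq:
  assumes "lam \<noteq> 0"
  shows "frame_coords lam p X = vector [X$2, X$1 / lam, X$3 + p$1 * X$2]"
  unfolding frame_coords_def
proof (rule the_equality)
  show "X = (\<Sum>i\<in>UNIV. (vector [X$2, X$1 / lam, X$3 + p$1 * X$2] :: real^3) $ i *\<^sub>R frame lam p i)"
    using assms by (simp add: vec_eq_iff forall_3 sum_3 frame_def)
next
  fix c :: "real^3"
  assume "X = (\<Sum>i\<in>UNIV. c $ i *\<^sub>R frame lam p i)"
  then have "X$1 = lam * c$2" "X$2 = c$1" "X$3 = - p$1 * c$1 + c$3"
    by (simp_all add: sum_3 frame_def)
  then show "c = vector [X$2, X$1 / lam, X$3 + p$1 * X$2]"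
    using assms by (simp add: vec_eq_iff forall_3)
qed

lemma wedge_V3:
  assumes "lam \<noteq> 0"
  shows "wedge lam p (V3 lam p) v = vector [
     - (lam^2) * p$2 * v$2,
     (v$3 + p$1 * v$2) + p$2 * v$1,
     - p$1 * ((v$3 + p$1 * v$2) + p$2 * v$1) + v$2]"
  unfolding wedge_def Let_def frame_coords_eq[OF assms]
  using assms by (simp add: vec_eq_iff forall_3 V3_def frame_def field_simps power2_eq_square)

text \<open>The last identity is \<open>(z' + x y')' = y'\<close> with the derivative expanded.\<close>

lemma V3_magnetic_equations:
  assumes "lam \<noteq> 0"
    and "cov_accel (g2 lam) p v a = wedge lam p (V3 lam p) v"
  shows "a$2 - v$1 * (v$3 + p$1 * v$2) = p$2 * v$1 + (v$3 + p$1 * v$2)"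
    and "a$1 / lam + lam * v$2 * (v$3 + p$1 * v$2) = - lam * p$2 * v$2"
    and "a$3 + v$1 * v$2 + p$1 * a$2 = v$2"
proof -
  have x: "a$1 + lam^2 * v$2 * (v$3 + p$1 * v$2) = - (lam^2) * p$2 * v$2"
    and y: "a$2 - v$1 * (v$3 + p$1 * v$2) = (v$3 + p$1 * v$2) + p$2 * v$1"
    and z: "a$3 + ((p$1)^2 + 1) * v$1 * v$2 + p$1 * v$1 * v$3
              = - p$1 * ((v$3 + p$1 * v$2) + p$2 * v$1) + v$2"
    using arg_cong[OF assms(2), of "\<lambda>u. u$1"] arg_cong[OF assms(2), of "\<lambda>u. u$2"]
      arg_cong[OF assms(2), of "\<lambda>u. u$3"]
    unfolding cov_accel_g2[OF assms(1)] wedge_V3[OF assms(1)] by simp_all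
  show "a$2 - v$1 * (v$3 + p$1 * v$2) = p$2 * v$1 + (v$3 + p$1 * v$2)"
    using y by simp
  show "a$1 / lam + lam * v$2 * (v$3 + p$1 * v$2) = - lam * p$2 * v$2"
  proof -
    have "a$1 = lam * (- lam * p$2 * v$2 - lam * v$2 * (v$3 + p$1 * v$2))"
      using x by (simp add: power2_eq_square algebra_simps)
    then show ?thesis using assms(1) by simp
  qed
  have "a$2 = v$1 * (v$3 + p$1 * v$2) + (v$3 + p$1 * v$2) + p$2 * v$1"
    using y by simp
  then show "a$3 + v$1 * v$2 + p$1 * a$2 = v$2"
    using z by (simp add: power2_eq_square algebra_simps)
qed

theorem mainTheorem7:
  fixes lam :: real and I :: "real set" and D :: "nat \<Rightarrow> real \<Rightarrow> real^3"
  assumes "lam > 0"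
    and "open I" and "is_interval I"
    and "smooth_curve_derivs I D"
    and "\<forall>t\<in>I. cov_accel (g2 lam) (D 0 t) (D 1 t) (D 2 t)
                 = wedge lam (D 0 t) (V3 lam (D 0 t)) (D 1 t)"
  shows "\<forall>t\<in>I.
      D 2 t $ 2 - D 1 t $ 1 * (D 1 t $ 3 + D 0 t $ 1 * D 1 t $ 2)
        = D 0 t $ 2 * D 1 t $ 1 + (D 1 t $ 3 + D 0 t $ 1 * D 1 t $ 2)
    \<and> D 2 t $ 1 / lam + lam * D 1 t $ 2 * (D 1 t $ 3 + D 0 t $ 1 * D 1 t $ 2)
        = - lam * D 0 t $ 2 * D 1 t $ 2
    \<and> ((\<lambda>s. D 1 s $ 3 + D 0 s $ 1 * D 1 s $ 2) has_real_derivative D 1 t $ 2) (at t)"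
proof
  fix t assume "t \<in> I"
  have lam: "lam \<noteq> 0" using assms(1) by simp
  note magnetic = V3_magnetic_equations[OF lam assms(5)[rule_format, OF \<open>t \<in> I\<close>]]
  have "(D 0 has_vector_derivative D 1 t) (at t)" "(D 1 has_vector_derivative D 2 t) (at t)"
    using assms(4) \<open>t \<in> I\<close> unfolding smooth_curve_derivs_def by (metis One_nat_def, metis Suc_1)
  then have "((\<lambda>s. D 1 s $ 3 + D 0 s $ 1 * D 1 s $ 2) has_real_derivative
               D 2 t $ 3 + D 1 t $ 1 * D 1 t $ 2 + D 0 t $ 1 * D 2 t $ 2) (at t)"
    by (auto intro!: derivative_eq_intros has_real_derivative_vec_nth)
  then have "((\<lambda>s. D 1 s $ 3 + D 0 s $ 1 * D 1 s $ 2) has_real_derivative D 1 t $ 2) (at t)"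
    using magnetic(3) by simp
  then show "D 2 t $ 2 - D 1 t $ 1 * (D 1 t $ 3 + D 0 t $ 1 * D 1 t $ 2)
        = D 0 t $ 2 * D 1 t $ 1 + (D 1 t $ 3 + D 0 t $ 1 * D 1 t $ 2)
    \<and> D 2 t $ 1 / lam + lam * D 1 t $ 2 * (D 1 t $ 3 + D 0 t $ 1 * D 1 t $ 2)
        = - lam * D 0 t $ 2 * D 1 t $ 2
    \<and> ((\<lambda>s. D 1 s $ 3 + D 0 s $ 1 * D 1 s $ 2) has_real_derivative D 1 t $ 2) (at t)"
    using magnetic(1,2) by simp
qed

end
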